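(* Let $K$ be a positive integer, let $\lambda_1^\star,\dots,\lambda_K^\star\ge0$, $C_1,\dots,C_K\ge0$, and $\mathcal{F}_1,\dots,\mathcal{F}_K\in(0,1)$. Set $\gamma_{-1}=\gamma_0=0$, $m_0=-1$, and for $k=1,\dots,K$ recursively $m_k=\max\{\mathcal{F}_k,\gamma_{k-1}\}$ and $\gamma_k=\frac1{k+1}+\frac{k}{k+1}m_k$. Let $\hat s_1\le\dots\le\hat s_K$ be integers with $\hat s_1\ge1$ and $1=s_0\le s_1\le\dots\le s_K$ be integers. Let $D_{k,s_k-1}\ge0$ ($k\in[K]$) be given, and let real numbers $B_{k,\ell}$ (integers $\ell\ge\hat s_k$) and $G_{k,\ell}$ (integers $\ell\ge s_k-1$) satisfy $0\le B_{k,\ell}\le2$ and, for all $k\in[K]$, $$B_{k,\ell}\le C_k\sum_{k'=1}^{k-1}\lambda_{k'}^\star G_{k',\ell-1}\quad(\ell\ge\hat s_k),$$ $$G_{k,\ell}\le\mathcal{F}_k^{\ell-s_k+1}D_{k,s_k-1}+\sum_{\ell'=s_k-1}^{\ell-1}\mathcal{F}_k^{\ell-\ell'}\big(B_{k,\ell'}+B_{k,\ell'-1}\big)+B_{k,\ell}\quad(\ell\ge s_k-1).$$ Define, recursively in $k$, $$\hat B_{k,\hat s_k}=C_k\sum_{k'=1}^{k-1}\lambda_{k'}^\star\hat G_{k',\hat s_k-1},\qquad \hat B_{k,\ell}=\min\big\{2,\ m_{k-1}^{\ell-\hat s_k}(\ell-\hat s_k+1)\hat B_{k,\hat s_k}\big\}\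 (\ell>\hat s_k),$$ $$\hat G_{k,s_k-1}=D_{k,s_k-1}+\hat B_{k,s_k-1}+\hat B_{k,s_k-2},\qquad \hat G_{k,\ell}=m_k^{\ell-s_k+1}(\ell-s_k+2)\hat G_{k,s_k-1}\ (\ell\ge s_k).$$ Suppose that for all $k\in[K]$: $\hat s_{k+1}\ge s_k$ (when $k<K$), $m_{k-1}^{s_k-\hat s_k-2}\le\frac{1}{s_k-\hat s_k-1}$, $s_k\ge\frac{km_{k-1}}{1-m_{k-1}}+\hat s_k+2$, and $\hat B_{k,\hat s_k}\le2$. Then for all $k\in[K]$: (1) $\hat B_{k,\ell}\ge B_{k,\ell}$ for all $\ell\ge\hat s_k$; and (2) $\hat G_{k,\ell}\ge G_{k,\ell}$ for all $\ell\ge s_k-1$.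
   Context: $[K]=\{1,\dots,K\}$. All indices $\ell,\ell'$ are integers. In the paper's application, $B_{k,\ell}=\|\mathbf{u}_{k,\ell}-\mathbf{u}_k^\star\|_2$ and $G_{k,\ell}=\|\mathbf{u}_k^\star-\mathbf{v}_{k,\ell}\|_2$ are distances between unit vectors and $D_{k,\ell}=\|\mathbf{v}_{k,\ell}-\mathbf{u}_{k,\ell}\|_2$, but the lemma is a statement about arbitrary sequences satisfying the displayed inequalities. *)

theory Defs
  imports Complex_Main
begin

fun gam :: "(nat \<Rightarrow> real) \<Rightarrow> nat \<Rightarrow> real" where
  "gam F 0 = 0"
| "gam F (Suc k) = 1 / (real k + 2) + (real k + 1) / (real k + 2) * max (F (Suc k)) (gam F k)"

definition mcoef :: "(nat \<Rightarrow> real) \<Rightarrow> nat \<Rightarrow> real" where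
  "mcoef F k = (if k = 0 then -1 else max (F k) (gam F (k - 1)))"

end

theory Submission
  imports Defs
begin

text \<open>
  Notation: sh, Bh and Gh are the paper's hatted quantities, and m k = mcoef F k.

  Induction on the level k. For k' < k the induction hypothesis and the monotonicity of m bound
  G k' (sh k - 1 + j) by m (k - 1) ^ j * (j + 1) * Gh k' (sh k - 1), so the recursion for B gives
  B k (sh k + j) \<le> m (k - 1) ^ j * (j + 1) * Bh k (sh k); with B \<le> 2 this is B \<le> Bh.
  For G, the lower bound on s k and m k \<ge> gam (k - 1) = (1 + (k - 1) m (k - 1)) / k make the
  factor m (k - 1) ^ j * (j + 1) decrease at rate m k from j = s k - sh k - 2 on, and the power
  hypothesis makes the clipping at 2 inactive there. So Bh k decays geometrically with ratio
  m k \<ge> F k past s k - 2, and the convolution in the recursion for G is bounded by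
  m k ^ n * (n + 1) * Gh k (s k - 1).
\<close>

lemma gam_bounds:
  assumes "\<And>i. 1 \<le> i \<Longrightarrow> i \<le> k \<Longrightarrow> 0 \<le> F i \<and> F i < 1"
  shows "0 \<le> gam F k \<and> gam F k < 1"
  using assms
proof (induction k)
  case 0
  then show ?case by simp
next
  case (Suc k)
  define x where "x = max (F (Suc k)) (gam F k)"
  have x: "0 \<le> x" "x < 1"
    using Suc.IH Suc.prems[of "Suc k"] Suc.prems by (auto simp: x_def)
  have "(real k + 1) * x < real k + 1"
    using x by (simp add: mult_less_cancel_left1)
  moreover have "gam F (Suc k) = (1 + (real k + 1) * x) / (real k + 2)"
    by (simp add: x_def field_simps)
  ultimately show ?case
    using x by (simp add: divide_less_eq algebra_simps)
qed

lemma gam_eq_mcoef: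
  assumes "1 \<le> k"
  shows "gam F k = 1 / (real k + 1) + real k / (real k + 1) * mcoef F k"
proof -
  obtain j where "k = Suc j" using assms by (cases k) auto
  then show ?thesis by (simp add: mcoef_def add.commute)
qed

lemma gam_le_mcoef_Suc: "gam F k \<le> mcoef F (Suc k)"
  by (simp add: mcoef_def)

lemma mcoef_le_mcoef_Suc:
  assumes "1 \<le> k" "mcoef F k \<le> 1"
  shows "mcoef F k \<le> mcoef F (Suc k)"
proof -
  have "mcoef F k \<le> gam F k"
    using assms by (simp add: gam_eq_mcoef field_simps)
  also have "gam F k \<le> mcoef F (Suc k)"
    by (rule gam_le_mcoef_Suc)
  finally show ?thesis .
qed

lemma mcoef_bounds:
  assumes "\<And>i. 1 \<le> i \<Longrightarrow> i \<le> k \<Longrightarrow> 0 < F i \<and> F i < 1" "1 \<le> k"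
  shows "0 < mcoef F k" "mcoef F k < 1" "F k \<le> mcoef F k"
proof -
  have "0 \<le> gam F (k - 1) \<and> gam F (k - 1) < 1"
    using assms(1) by (intro gam_bounds) (simp add: less_imp_le)
  moreover have "0 < F k" "F k < 1"
    using assms by auto
  ultimately show "0 < mcoef F k" "mcoef F k < 1" "F k \<le> mcoef F k"
    using assms(2) by (auto simp: mcoef_def)
qed

lemma mcoef_mono:
  assumes "\<And>i. 1 \<le> i \<Longrightarrow> i \<le> k \<Longrightarrow> 0 < F i \<and> F i < 1" "1 \<le> k'" "k' \<le> k"
  shows "mcoef F k' \<le> mcoef F k"
proof (rule lift_Suc_mono_le_ivl[of "{1..<k}"])
  fix n assume "n \<in> {1..<k}"
  then show "mcoef F n \<le> mcoef F (Suc n)"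
    using assms(1) mcoef_bounds(2)[of n F] by (intro mcoef_le_mcoef_Suc) auto
qed (use assms in auto)

lemma power_linear_ratio_le:
  fixes m M k j :: real
  assumes "0 < m" "m < 1" "1 \<le> k" "1 / k + (k - 1) / k * m \<le> M" "k * m / (1 - m) \<le> j + 1"
  shows "m * (j + 2) \<le> M * (j + 1)"
proof -
  have km: "k * m \<le> (j + 1) * (1 - m)"
    using assms(2,5) by (simp add: pos_divide_le_eq)
  have "0 \<le> k * m / (1 - m)"
    using assms(1-3) by simp
  then have j: "0 \<le> j + 1"
    using assms(5) by linarith
  have "k * (m * (j + 2)) \<le> (1 + (k - 1) * m) * (j + 1)"
    using km by (simp add: algebra_simps)
  also have "\<dots> = k * ((1 / k + (k - 1) / k * m) * (j + 1))"
    using assms(3) by (simp add: field_simps)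
  also have "\<dots> \<le> k * (M * (j + 1))"
    using assms(3,4) j by (intro mult_left_mono mult_right_mono) auto
  finally show ?thesis
    using assms(3) by simp
qed

lemma power_linear_Suc_le:
  fixes m M :: real
  assumes "0 \<le> m" "m * (real j + 2) \<le> M * (real j + 1)"
  shows "m ^ Suc j * (real (Suc j) + 1) \<le> M * (m ^ j * (real j + 1))"
proof -
  have "m ^ Suc j * (real (Suc j) + 1) = m ^ j * (m * (real j + 2))"
    by (simp add: algebra_simps)
  also have "\<dots> \<le> m ^ j * (M * (real j + 1))"
    using assms by (intro mult_left_mono) auto
  finally show ?thesis
    by (simp add: algebra_simps)
qed

lemma power_linear_le_one:
  fixes m M :: real
  assumes "0 \<le> m" "M \<le> 1" "\<And>j. j0 \<le> j \<Longrightarrow> m * (real j + 2) \<le> M * (real j + 1)"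
    and "m ^ j0 * (real j0 + 1) \<le> 1" "j0 \<le> j"
  shows "m ^ j * (real j + 1) \<le> 1"
  using assms(5)
proof (induction j rule: dec_induct)
  case base
  show ?case using assms(4) .
next
  case (step j)
  have "m ^ Suc j * (real (Suc j) + 1) \<le> M * (m ^ j * (real j + 1))"
    using step.hyps assms(1,3) by (intro power_linear_Suc_le) auto
  also have "\<dots> \<le> 1 * 1"
    using step.IH assms(1,2) by (intro mult_mono) auto
  finally show ?case by simp
qed

lemma bounded_ratio_power_le:
  fixes M :: real and b :: "nat \<Rightarrow> real"
  assumes "0 \<le> M" "\<And>i. b (Suc i) \<le> M * b i"
  shows "b (j + i) \<le> M ^ i * b j"
proof (induction i)
  case 0
  show ?case by simp
next
  case (Suc i)
  have "b (j + Suc i) \<le> M * b (j + i)"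
    using assms(2) by simp
  also have "\<dots> \<le> M * (M ^ i * b j)"
    using Suc assms(1) by (intro mult_left_mono)
  finally show ?case by simp
qed

lemma geometric_convolution_le:
  fixes f M D :: real and b \<beta> :: "nat \<Rightarrow> real"
  assumes "0 \<le> f" "f \<le> M" "0 \<le> D" "\<And>i. b (Suc i) \<le> M * b i"
    and "\<And>i. 0 \<le> \<beta> i" "\<And>i. \<beta> i \<le> b i"
  shows "f ^ n * D + (\<Sum>i<n. f ^ (n - i) * (\<beta> (Suc i) + \<beta> i)) + \<beta> (Suc n)
         \<le> M ^ n * (real n + 1) * (D + b 1 + b 0)"
proof -
  have M: "0 \<le> M"
    using assms(1,2) by linarith
  have geo: "b (j + i) \<le> M ^ i * b j" for j i
    using M assms(4) by (rule bounded_ratio_power_le)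
  have b0: "\<beta> i \<le> M ^ i * b 0" and b1: "\<beta> (Suc i) \<le> M ^ i * b 1" for i
    using geo[of 0 i] geo[of 1 i] assms(6)[of i] assms(6)[of "Suc i"] by simp_all
  have "f ^ (n - i) * (\<beta> (Suc i) + \<beta> i) \<le> M ^ n * (b 1 + b 0)" if "i < n" for i
  proof -
    have "\<beta> (Suc i) + \<beta> i \<le> M ^ i * (b 1 + b 0)"
      using b0[of i] b1[of i] by (simp add: distrib_left)
    moreover have "f ^ (n - i) \<le> M ^ (n - i)"
      using assms(1,2) by (intro power_mono)
    ultimately have "f ^ (n - i) * (\<beta> (Suc i) + \<beta> i) \<le> M ^ (n - i) * (M ^ i * (b 1 + b 0))"
      using assms(1,5) M by (intro mult_mono) (auto intro: add_nonneg_nonneg)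
    also have "\<dots> = M ^ n * (b 1 + b 0)"
      using that by (simp flip: mult.assoc power_add)
    finally show ?thesis .
  qed
  then have "(\<Sum>i<n. f ^ (n - i) * (\<beta> (Suc i) + \<beta> i)) \<le> (\<Sum>i<n. M ^ n * (b 1 + b 0))"
    by (intro sum_mono) simp
  also have "\<dots> = real n * (M ^ n * (b 1 + b 0))"
    by simp
  finally have conv: "(\<Sum>i<n. f ^ (n - i) * (\<beta> (Suc i) + \<beta> i)) \<le> real n * (M ^ n * (b 1 + b 0))" .
  have "f ^ n * D \<le> M ^ n * D"
    using assms(1-3) by (intro mult_right_mono power_mono) auto
  moreover have "0 \<le> M ^ n * b 0" "0 \<le> real n * (M ^ n * D)"
    using M assms(3) assms(5,6)[of 0] by auto
  moreover have "M ^ n * (real n + 1) * (D + b 1 + b 0)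
      = M ^ n * D + real n * (M ^ n * (b 1 + b 0)) + M ^ n * b 1 + M ^ n * b 0 + real n * (M ^ n * D)"
    by (simp add: algebra_simps)
  ultimately show ?thesis
    using conv b1[of n] by linarith
qed

lemma power_linear_add_le:
  fixes m' m g :: real
  assumes "0 \<le> m'" "m' \<le> m" "0 \<le> g"
  shows "m' ^ (a + j) * (real (a + j) + 1) * g \<le> m ^ j * (real j + 1) * (m' ^ a * (real a + 1) * g)"
proof -
  have "m' ^ j * (real (a + j) + 1) \<le> m ^ j * ((real j + 1) * (real a + 1))"
    using assms by (intro mult_mono power_mono) (auto simp: algebra_simps)
  then have "m' ^ a * (m' ^ j * (real (a + j) + 1)) * g
      \<le> m' ^ a * (m ^ j * ((real j + 1) * (real a + 1))) * g"
    using assms by (intro mult_right_mono mult_left_mono) auto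
  then show ?thesis
    by (simp add: power_add algebra_simps)
qed

lemma sum_int_interval_eq_sum_lessThan:
  fixes g :: "int \<Rightarrow> 'a::comm_monoid_add"
  shows "(\<Sum>x\<in>{a..a + int n - 1}. g x) = (\<Sum>i<n. g (a + int i))"
proof (induction n)
  case 0
  show ?case by simp
next
  case (Suc n)
  have "{a..a + int (Suc n) - 1} = insert (a + int n) {a..a + int n - 1}"
    by auto
  then show ?case
    using Suc by (simp add: add.commute)
qed

locale coupled_error_recursion =
  fixes K :: nat
    and lam C F D :: "nat \<Rightarrow> real"
    and sh s :: "nat \<Rightarrow> int"
    and B G Bh Gh :: "nat \<Rightarrow> int \<Rightarrow> real"
  assumes lam_nn: "\<And>k. k \<in> {1..K} \<Longrightarrow> 0 \<le> lam k"
    and C_nn: "\<And>k. k \<in> {1..K} \<Longrightarrow> 0 \<le> C k"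
    and F_range: "\<And>k. k \<in> {1..K} \<Longrightarrow> 0 < F k \<and> F k < 1"
    and sh_mono: "\<And>k. k \<in> {1..<K} \<Longrightarrow> sh k \<le> sh (k + 1)"
    and D_nn: "\<And>k. k \<in> {1..K} \<Longrightarrow> 0 \<le> D k"
    and B_range: "\<And>k l. k \<in> {1..K} \<Longrightarrow> sh k \<le> l \<Longrightarrow> 0 \<le> B k l \<and> B k l \<le> 2"
    and B_rec: "\<And>k l. k \<in> {1..K} \<Longrightarrow> sh k \<le> l \<Longrightarrow>
      B k l \<le> C k * (\<Sum>k'\<in>{1..<k}. lam k' * G k' (l - 1))"
    and G_rec: "\<And>k l. k \<in> {1..K} \<Longrightarrow> s k - 1 \<le> l \<Longrightarrow>
      G k l \<le> F k powi (l - s k + 1) * D k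
        + (\<Sum>l'\<in>{s k - 1 .. l - 1}. F k powi (l - l') * (B k l' + B k (l' - 1))) + B k l"
    and Bh_first: "\<And>k. k \<in> {1..K} \<Longrightarrow>
      Bh k (sh k) = C k * (\<Sum>k'\<in>{1..<k}. lam k' * Gh k' (sh k - 1))"
    and Bh_later: "\<And>k l. k \<in> {1..K} \<Longrightarrow> sh k < l \<Longrightarrow>
      Bh k l = min 2 (mcoef F (k - 1) powi (l - sh k) * of_int (l - sh k + 1) * Bh k (sh k))"
    and Gh_first: "\<And>k. k \<in> {1..K} \<Longrightarrow> Gh k (s k - 1) = D k + Bh k (s k - 1) + Bh k (s k - 2)"
    and Gh_later: "\<And>k l. k \<in> {1..K} \<Longrightarrow> s k \<le> l \<Longrightarrow>
      Gh k l = mcoef F k powi (l - s k + 1) * of_int (l - s k + 2) * Gh k (s k - 1)"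
    and sh_s: "\<And>k. k \<in> {1..<K} \<Longrightarrow> s k \<le> sh (k + 1)"
    and m_pow: "\<And>k. k \<in> {1..K} \<Longrightarrow>
      mcoef F (k - 1) powi (s k - sh k - 2) \<le> 1 / of_int (s k - sh k - 1)"
    and s_large: "\<And>k. k \<in> {1..K} \<Longrightarrow>
      real k * mcoef F (k - 1) / (1 - mcoef F (k - 1)) + of_int (sh k) + 2 \<le> of_int (s k)"
    and Bh_le2: "\<And>k. k \<in> {1..K} \<Longrightarrow> Bh k (sh k) \<le> 2"
begin

definition Bh_bounds_B :: "nat \<Rightarrow> bool" where
  "Bh_bounds_B k \<longleftrightarrow> (\<forall>l \<ge> sh k. B k l \<le> Bh k l)"

definition Gh_bounds_G :: "nat \<Rightarrow> bool" where
  "Gh_bounds_G k \<longleftrightarrow> (\<forall>l \<ge> s k - 1. G k l \<le> Gh k l)"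

lemma mcoef_range:
  assumes "k \<in> {1..K}"
  shows "0 < mcoef F k" "mcoef F k < 1" "F k \<le> mcoef F k"
proof -
  have "\<And>i. 1 \<le> i \<Longrightarrow> i \<le> k \<Longrightarrow> 0 < F i \<and> F i < 1"
    using assms F_range by auto
  then show "0 < mcoef F k" "mcoef F k < 1" "F k \<le> mcoef F k"
    using mcoef_bounds assms by auto
qed

lemma mcoef_pred_range:
  assumes "k \<in> {1..K}" "2 \<le> k"
  shows "0 < mcoef F (k - 1)" "mcoef F (k - 1) < 1"
proof -
  have "k - 1 \<in> {1..K}"
    using assms by auto
  then show "0 < mcoef F (k - 1)" "mcoef F (k - 1) < 1"
    by (rule mcoef_range)+
qed

lemma mcoef_le_mcoef:
  assumes "1 \<le> k'" "k' \<le> k" "k \<le> K"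
  shows "mcoef F k' \<le> mcoef F k"
  using assms F_range by (intro mcoef_mono) auto

lemma s_le_sh:
  assumes "k' \<in> {1..<k}" "k \<le> K"
  shows "s k' \<le> sh k"
proof -
  have "s k' \<le> sh (Suc k')"
    using assms sh_s by simp
  also have "\<dots> \<le> sh k"
  proof (rule lift_Suc_mono_le_ivl[of "{1..<K}" sh])
    show "sh n \<le> sh (Suc n)" if "n \<in> {1..<K}" for n
      using sh_mono[OF that] by simp
  qed (use assms in auto)
  finally show ?thesis .
qed

lemma sh_add_two_le_s:
  assumes "k \<in> {1..K}"
  shows "sh k + 2 \<le> s k"
proof -
  have "-1 < real k * mcoef F (k - 1) / (1 - mcoef F (k - 1))"
  proof (cases "k = 1")
    case True
    then show ?thesis by (simp add: mcoef_def)
  next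
    case False
    then have "2 \<le> k"
      using assms by auto
    with assms have "0 < mcoef F (k - 1)" "mcoef F (k - 1) < 1"
      by (rule mcoef_pred_range)+
    then have "0 \<le> real k * mcoef F (k - 1) / (1 - mcoef F (k - 1))"
      by simp
    then show ?thesis
      by linarith
  qed
  then show ?thesis
    using s_large[OF assms] by linarith
qed

lemma Gh_shift:
  assumes "k \<in> {1..K}"
  shows "Gh k (s k - 1 + int n) = mcoef F k ^ n * (real n + 1) * Gh k (s k - 1)"
proof (cases "n = 0")
  case False
  then have "s k \<le> s k - 1 + int n"
    by simp
  moreover have "s k - 1 + int n - s k + 1 = int n" "s k - 1 + int n - s k + 2 = int n + 1"
    by simp_all
  ultimately show ?thesis
    using Gh_later[OF assms] by simp
qed simp

lemma Bh_shift:
  assumes "k \<in> {1..K}"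
  shows "Bh k (sh k + int j) = min 2 (mcoef F (k - 1) ^ j * (real j + 1) * Bh k (sh k))"
proof (cases "j = 0")
  case True
  then show ?thesis
    using Bh_le2[OF assms] by simp
next
  case False
  then have "sh k < sh k + int j"
    by simp
  moreover have "sh k + int j - sh k = int j" "sh k + int j - sh k + 1 = int j + 1"
    by simp_all
  ultimately show ?thesis
    using Bh_later[OF assms] by simp
qed

lemma Bh_nonneg:
  assumes "k \<in> {1..K}" "Bh_bounds_B k" "sh k \<le> l"
  shows "0 \<le> Bh k l"
  using assms B_range[of k l] unfolding Bh_bounds_B_def by fastforce

lemma Gh_first_nonneg:
  assumes "k \<in> {1..K}" "Bh_bounds_B k"
  shows "0 \<le> Gh k (s k - 1)"
  using assms Gh_first D_nn sh_add_two_le_s[OF assms(1)] Bh_nonneg[of k "s k - 1"]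
    Bh_nonneg[of k "s k - 2"] by simp

lemma G_le_scaled_Gh:
  assumes k': "k' \<in> {1..<k}" and "k \<le> K" "Bh_bounds_B k'" "Gh_bounds_G k'"
  shows "G k' (sh k - 1 + int j) \<le> mcoef F (k - 1) ^ j * (real j + 1) * Gh k' (sh k - 1)"
proof -
  have k'K: "k' \<in> {1..K}"
    using assms by auto
  define a where "a = nat (sh k - s k')"
  have a: "sh k - 1 = s k' - 1 + int a"
    using s_le_sh[OF assms(1,2)] by (simp add: a_def)
  have "G k' (s k' - 1 + int (a + j)) \<le> Gh k' (s k' - 1 + int (a + j))"
    using assms(4) unfolding Gh_bounds_G_def by auto
  moreover have "sh k - 1 + int j = s k' - 1 + int (a + j)"
    using a by simp
  ultimately have "G k' (sh k - 1 + int j) \<le> Gh k' (s k' - 1 + int (a + j))"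
    by (simp only:)
  also have "\<dots> = mcoef F k' ^ (a + j) * (real (a + j) + 1) * Gh k' (s k' - 1)"
    using k'K by (rule Gh_shift)
  also have "\<dots> \<le> mcoef F (k - 1) ^ j * (real j + 1) * (mcoef F k' ^ a * (real a + 1) * Gh k' (s k' - 1))"
    using assms mcoef_range(1)[OF k'K] mcoef_le_mcoef[of k' "k - 1"] Gh_first_nonneg[OF k'K]
    by (intro power_linear_add_le) auto
  also have "\<dots> = mcoef F (k - 1) ^ j * (real j + 1) * Gh k' (sh k - 1)"
    unfolding a Gh_shift[OF k'K] ..
  finally show ?thesis .
qed

lemma Bh_bounds_B_if_lower_levels:
  assumes k: "k \<in> {1..K}" and lower: "\<And>k'. k' \<in> {1..<k} \<Longrightarrow> Bh_bounds_B k' \<and> Gh_bounds_G k'"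
  shows "Bh_bounds_B k"
  unfolding Bh_bounds_B_def
proof (intro allI impI)
  fix l
  assume l_ge: "sh k \<le> l"
  then obtain j where l: "l = sh k + int j"
    using zle_iff_zadd by blast
  let ?w = "mcoef F (k - 1) ^ j * (real j + 1)"
  have "l - 1 = sh k - 1 + int j"
    using l by simp
  then have "B k l \<le> C k * (\<Sum>k'\<in>{1..<k}. lam k' * G k' (sh k - 1 + int j))"
    using B_rec[OF k l_ge] by (simp only:)
  also have "\<dots> \<le> C k * (\<Sum>k'\<in>{1..<k}. lam k' * (?w * Gh k' (sh k - 1)))"
    using k lower C_nn lam_nn G_le_scaled_Gh by (intro mult_left_mono sum_mono) auto
  also have "\<dots> = ?w * Bh k (sh k)"
    unfolding Bh_first[OF k] by (simp add: sum_distrib_left mult.left_commute)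
  finally have "B k l \<le> ?w * Bh k (sh k)" .
  then show "B k l \<le> Bh k l"
    using B_range[OF k, of l] Bh_shift[OF k, of j] l by simp
qed

lemma mcoef_ratio_le:
  assumes k: "k \<in> {1..K}" "2 \<le> k" and j: "s k - 2 \<le> sh k + int j"
  shows "mcoef F (k - 1) * (real j + 2) \<le> mcoef F k * (real j + 1)"
proof -
  have "1 / real k + (real k - 1) / real k * mcoef F (k - 1) = gam F (k - 1)"
    using gam_eq_mcoef[of "k - 1" F] k by (simp add: of_nat_diff)
  also have "\<dots> \<le> mcoef F k"
    using gam_le_mcoef_Suc[of F "k - 1"] k by simp
  finally have M: "1 / real k + (real k - 1) / real k * mcoef F (k - 1) \<le> mcoef F k" .
  have "real_of_int (s k) \<le> of_int (sh k) + real j + 2"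
    using j by linarith
  then have "real k * mcoef F (k - 1) / (1 - mcoef F (k - 1)) \<le> real j + 1"
    using s_large[OF k(1)] by linarith
  then show ?thesis
    using power_linear_ratio_le[OF mcoef_pred_range[OF k] _ M] k by simp
qed

lemma Bh_eq_unclipped:
  assumes k: "k \<in> {1..K}" "2 \<le> k" and "0 \<le> Bh k (sh k)" and j: "s k - 2 \<le> sh k + int j"
  shows "Bh k (sh k + int j) = mcoef F (k - 1) ^ j * (real j + 1) * Bh k (sh k)"
proof -
  let ?m = "mcoef F (k - 1)"
  have m: "0 < ?m" "?m < 1"
    using k by (rule mcoef_pred_range)+
  define j0 where "j0 = nat (s k - sh k - 2)"
  have j0: "s k - sh k - 2 = int j0" "s k - sh k - 1 = int j0 + 1" "j0 \<le> j"
    using sh_add_two_le_s[OF k(1)] j by (auto simp: j0_def)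
  have "?m ^ j0 \<le> 1 / (real j0 + 1)"
    using m_pow[OF k(1)] unfolding j0(1,2) by simp
  then have start: "?m ^ j0 * (real j0 + 1) \<le> 1"
    by (simp add: field_simps)
  have "?m ^ j * (real j + 1) \<le> 1"
  proof (rule power_linear_le_one[of ?m "mcoef F k" j0])
    show "?m * (real i + 2) \<le> mcoef F k * (real i + 1)" if "j0 \<le> i" for i
      using mcoef_ratio_le[OF k] j0(1) that by simp
  qed (use m(1) mcoef_range(2)[OF k(1)] start j0(3) in auto)
  then have "?m ^ j * (real j + 1) * Bh k (sh k) \<le> 1 * 2"
    using assms(3) Bh_le2[OF k(1)] by (intro mult_mono) auto
  then show ?thesis
    using Bh_shift[OF k(1), of j] by simp
qed

lemma Bh_decay:
  assumes k: "k \<in> {1..K}" and bb: "0 \<le> Bh k (sh k)" and l: "s k - 2 \<le> l"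
  shows "Bh k (l + 1) \<le> mcoef F k * Bh k l"
proof -
  obtain j where j: "l = sh k + int j"
    using sh_add_two_le_s[OF k] l zle_iff_zadd[of "sh k" l] by auto
  have Suc_j: "l + 1 = sh k + int (Suc j)"
    using j by simp
  show ?thesis
  proof (cases "k = 1")
    case True
    \<comment> \<open>here mcoef F 0 = -1, but Bh 1 vanishes: its defining sum over {1..<1} is empty\<close>
    then have "Bh k (sh k) = 0"
      using Bh_first[OF k] by simp
    then have Bh0: "Bh k (sh k + int i) = 0" for i
      using Bh_shift[OF k, of i] by simp
    have "Bh k (l + 1) = 0"
      unfolding Suc_j by (rule Bh0)
    moreover have "Bh k l = 0"
      unfolding j by (rule Bh0)
    ultimately show ?thesis
      by simp
  next
    case False
    then have k2: "2 \<le> k"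
      using k by auto
    let ?m = "mcoef F (k - 1)"
    have "Bh k (l + 1) = ?m ^ Suc j * (real (Suc j) + 1) * Bh k (sh k)"
      unfolding Suc_j using j l by (intro Bh_eq_unclipped[OF k k2 bb]) auto
    also have "\<dots> \<le> mcoef F k * (?m ^ j * (real j + 1)) * Bh k (sh k)"
      using mcoef_ratio_le[OF k k2] mcoef_pred_range(1)[OF k k2] j l bb
      by (intro mult_right_mono power_linear_Suc_le) auto
    also have "\<dots> = mcoef F k * Bh k l"
      using Bh_eq_unclipped[OF k k2 bb, of j] j l by simp
    finally show ?thesis .
  qed
qed

lemma G_le_reindexed:
  assumes k: "k \<in> {1..K}"
  shows "G k (s k - 1 + int n) \<le> F k ^ n * D k
    + (\<Sum>i<n. F k ^ (n - i) * (B k (s k - 1 + int i) + B k (s k - 2 + int i)))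
    + B k (s k - 1 + int n)"
proof -
  let ?l = "s k - 1 + int n"
  have "(\<Sum>l'\<in>{s k - 1..?l - 1}. F k powi (?l - l') * (B k l' + B k (l' - 1)))
      = (\<Sum>i<n. F k powi (?l - (s k - 1 + int i)) * (B k (s k - 1 + int i) + B k (s k - 1 + int i - 1)))"
    by (rule sum_int_interval_eq_sum_lessThan)
  also have "\<dots> = (\<Sum>i<n. F k ^ (n - i) * (B k (s k - 1 + int i) + B k (s k - 2 + int i)))"
  proof (rule sum.cong)
    fix i
    assume "i \<in> {..<n}"
    then have "?l - (s k - 1 + int i) = int (n - i)" "s k - 1 + int i - 1 = s k - 2 + int i"
      by auto
    then show "F k powi (?l - (s k - 1 + int i)) * (B k (s k - 1 + int i) + B k (s k - 1 + int i - 1))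
        = F k ^ (n - i) * (B k (s k - 1 + int i) + B k (s k - 2 + int i))"
      by (simp only: power_int_of_nat)
  qed (rule refl)
  finally have sum_eq: "(\<Sum>l'\<in>{s k - 1..?l - 1}. F k powi (?l - l') * (B k l' + B k (l' - 1)))
      = (\<Sum>i<n. F k ^ (n - i) * (B k (s k - 1 + int i) + B k (s k - 2 + int i)))" .
  have "s k - 1 \<le> ?l"
    by simp
  note G_rec[OF k this]
  moreover have "?l - s k + 1 = int n"
    by simp
  ultimately show ?thesis
    unfolding sum_eq by simp
qed

lemma Gh_bounds_G_if_Bh_bounds_B:
  assumes k: "k \<in> {1..K}" and Bk: "Bh_bounds_B k"
  shows "Gh_bounds_G k"
  unfolding Gh_bounds_G_def
proof (intro allI impI)
  fix l
  assume "s k - 1 \<le> l"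
  then obtain n where l: "l = s k - 1 + int n"
    using zle_iff_zadd by blast
  define b where "b i = Bh k (s k - 2 + int i)" for i
  define \<beta> where "\<beta> i = B k (s k - 2 + int i)" for i
  have sk: "sh k + 2 \<le> s k"
    using sh_add_two_le_s[OF k] .
  have \<beta>: "0 \<le> \<beta> i" "\<beta> i \<le> b i" for i
    using B_range[OF k] Bk sk unfolding Bh_bounds_B_def \<beta>_def b_def by auto
  have decay: "b (Suc i) \<le> mcoef F k * b i" for i
    using Bh_decay[OF k Bh_nonneg[OF k Bk order.refl], of "s k - 2 + int i"]
    unfolding b_def by (simp add: add.assoc)
  have \<beta>_Suc: "B k (s k - 1 + int i) = \<beta> (Suc i)" for i
    unfolding \<beta>_def by (rule arg_cong[where f = "B k"]) simp
  have "G k l \<le> F k ^ n * D k + (\<Sum>i<n. F k ^ (n - i) * (\<beta> (Suc i) + \<beta> i)) + \<beta> (Suc n)"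
    using G_le_reindexed[OF k, of n] unfolding l \<beta>_Suc \<beta>_def[symmetric] .
  also have "\<dots> \<le> mcoef F k ^ n * (real n + 1) * (D k + b 1 + b 0)"
    using F_range[OF k] mcoef_range(3)[OF k] D_nn[OF k] decay \<beta>
    by (intro geometric_convolution_le) auto
  also have "\<dots> = Gh k l"
    using Gh_shift[OF k, of n] Gh_first[OF k] l unfolding b_def by simp
  finally show "G k l \<le> Gh k l" .
qed

lemma Bh_Gh_dominate:
  assumes "k \<in> {1..K}"
  shows "Bh_bounds_B k \<and> Gh_bounds_G k"
  using assms
proof (induction k rule: less_induct)
  case (less k)
  then have "Bh_bounds_B k"
    by (intro Bh_bounds_B_if_lower_levels) auto
  then show ?case
    using less.prems Gh_bounds_G_if_Bh_bounds_B by blast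
qed

end

theorem lemma3:
  fixes K :: nat
    and lam C F D :: "nat \<Rightarrow> real"
    and sh s :: "nat \<Rightarrow> int"
    and B G Bh Gh :: "nat \<Rightarrow> int \<Rightarrow> real"
  assumes K_pos: "K \<ge> 1"
    and lam_nn: "\<forall>k\<in>{1..K}. lam k \<ge> 0"
    and C_nn: "\<forall>k\<in>{1..K}. C k \<ge> 0"
    and F_range: "\<forall>k\<in>{1..K}. 0 < F k \<and> F k < 1"
    and sh_mono: "\<forall>k\<in>{1..<K}. sh k \<le> sh (k + 1)"
    and sh_1: "sh 1 \<ge> 1"
    and s_0: "s 0 = 1"
    and s_mono: "\<forall>k<K. s k \<le> s (k + 1)"
    and D_nn: "\<forall>k\<in>{1..K}. D k \<ge> 0"
    and B_range: "\<forall>k\<in>{1..K}. \<forall>l \<ge> sh k. 0 \<le> B k l \<and> B k l \<le> 2"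
    and B_rec: "\<forall>k\<in>{1..K}. \<forall>l \<ge> sh k.
                  B k l \<le> C k * (\<Sum>k'\<in>{1..<k}. lam k' * G k' (l - 1))"
    and G_rec: "\<forall>k\<in>{1..K}. \<forall>l \<ge> s k - 1.
                  G k l \<le> F k powi (l - s k + 1) * D k
                         + (\<Sum>l'\<in>{s k - 1 .. l - 1}. F k powi (l - l') * (B k l' + B k (l' - 1)))
                         + B k l"
    and Bh_first: "\<forall>k\<in>{1..K}. Bh k (sh k) = C k * (\<Sum>k'\<in>{1..<k}. lam k' * Gh k' (sh k - 1))"
    and Bh_later: "\<forall>k\<in>{1..K}. \<forall>l > sh k.
                  Bh k l = min 2 (mcoef F (k - 1) powi (l - sh k) * of_int (l - sh k + 1) * Bh k (sh k))"
    and Gh_first: "\<forall>k\<in>{1..K}. Gh k (s k - 1) = D k + Bh k (s k - 1) + Bh k (s k - 2)"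
    and Gh_later: "\<forall>k\<in>{1..K}. \<forall>l \<ge> s k.
                  Gh k l = mcoef F k powi (l - s k + 1) * of_int (l - s k + 2) * Gh k (s k - 1)"
    and sh_s: "\<forall>k\<in>{1..<K}. sh (k + 1) \<ge> s k"
    and m_pow: "\<forall>k\<in>{1..K}. mcoef F (k - 1) powi (s k - sh k - 2) \<le> 1 / of_int (s k - sh k - 1)"
    and s_large: "\<forall>k\<in>{1..K}. of_int (s k) \<ge> real k * mcoef F (k - 1) / (1 - mcoef F (k - 1)) + of_int (sh k) + 2"
    and Bh_le2: "\<forall>k\<in>{1..K}. Bh k (sh k) \<le> 2"
  shows "\<forall>k\<in>{1..K}. (\<forall>l \<ge> sh k. Bh k l \<ge> B k l) \<and> (\<forall>l \<ge> s k - 1. Gh k l \<ge> G k l)"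
proof -
  interpret coupled_error_recursion K lam C F D sh s B G Bh Gh
    by (unfold_locales; rule assms[rule_format]; assumption)
  show ?thesis
    using Bh_Gh_dominate unfolding Bh_bounds_B_def Gh_bounds_G_def by blast
qed

end
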